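(* (a) For every $b\in\Lambda^2_0E$, the tensor $R=\vartheta(b\otimes g)+12\,\psi(b\otimes g)$ lies in $\mathcal R$, satisfies $L(R)=6R$ and $L_\sigma(R)=0$, and $\mathrm{Ric}(R)=48(n+1)b$. (b) $\vartheta(g\otimes g)+12\psi(g\otimes g)$ is a nonzero multiple of $\pi_2+6\pi_1$, and $\mathrm{Ric}(\pi_2+6\pi_1)=12(2n+1)g$. (c) If $R\in\mathcal R$ satisfies $L(R)=6R$ and $L_\sigma(R)=0$, then $\mathrm{Ric}(R)=\mathrm{Ric}^q(R)$ and $A\,\mathrm{Ric}(R)=\mathrm{Ric}(R)$ for $A=I,J,K$ (i.e. $\mathrm{Ric}(R)\in\mathbb Rg+\Lambda^2_0E$).
   Context: $\mathcal V$ is a real $4n$-dimensional vector space with inner product $g=\langle\cdot,\cdot\rangle$ and endomorphisms $I,J,K$ with $I^2=J^2=-1$, $K=IJ=-JI$, $\langle Ax,Ay\rangle=\langle x,y\rangle$; $\omega_A(x,y)=\langle x,Ay\rangle$; $\{e_i\}$ orthonormal basis, summation convention. $\mathcal R$: algebraic curvature tensors (4-linear $R$ with $R(x,y,z,u)=-R(y,x,z,u)=-R(x,y,u,z)=R(z,u,x,y)$ and first Bianchi identity). $\mathrm{Ric}(R)(x,y)=R(x,e_i,y,e_i)$, $\mathrm{Ric}^q(R)(x,y)=\sum_AR(x,e_i,Ay,Ae_i)$. For an $s$-linear form $b$: $(A_{(i)}b)(X_1,..,X_s)=-b(X_1,..,AX_i,..,X_s)$ and $(Ab)(X_1,..,X_s)=(-1)^sb(AX_1,..,AX_s)$.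 $L$ and $L_\sigma$: $L(R)=\sum_A\sum_{i<j}A_{(i)}A_{(j)}R$, $L_\sigma(R)=\sum_A(A_{(1)}A_{(2)}+A_{(2)}A_{(3)}\sigma+A_{(1)}A_{(3)}\sigma^2+A_{(3)}A_{(4)}+A_{(1)}A_{(4)}\sigma+A_{(2)}A_{(4)}\sigma^2)R$ with $\sigma R(x,y,z,u)=R(z,x,y,u)$, words applied right to left. For bilinear forms $b,c$: $(b\otimes c)(x,y,z,u)=b(x,y)c(z,u)$, $b\odot c=\tfrac12(b\otimes c+c\otimes b)$, and $(b\wedge c)(x,y,z,u)=b(x,y)c(z,u)+b(z,u)c(x,y)-b(x,z)c(y,u)-b(y,u)c(x,z)+b(x,u)c(y,z)+b(y,z)c(x,u)$. For symmetric $b,c$: $\psi(b\otimes c)(x,y,z,u)=b(x,z)c(y,u)-b(x,u)c(y,z)+c(x,z)b(y,u)-c(x,u)b(y,z)$ and $\vartheta(b\otimes c)=\sum_A\big(6(A_{(1)}-A_{(2)})b\odot(A_{(1)}-A_{(2)})c-(A_{(1)}-A_{(2)})b\wedge(A_{(1)}-A_{(2)})c\big)$. $\pi_1(x,y,z,u)=\langle x,z\rangle\langle y,u\rangle-\langle x,u\rangle\langle y,z\rangle$, $\pi_2=\sum_A(6\omega_A\odot\omega_A-\omega_A\wedge\omega_A)$. $\Lambda^2_0E$ denotes the space of symmetric trace-free bilinear forms $b$ on $\mathcal V$ with $b(Ax,Ay)=b(x,y)$ for $A=I,J,K$. *)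

theory Defs
  imports "HOL-Analysis.Analysis"
begin

type_synonym 'v form2 = "'v \<Rightarrow> 'v \<Rightarrow> real"
type_synonym 'v form4 = "'v \<Rightarrow> 'v \<Rightarrow> 'v \<Rightarrow> 'v \<Rightarrow> real"

definition quaternionic :: "('v::euclidean_space \<Rightarrow> 'v) \<Rightarrow> ('v \<Rightarrow> 'v) \<Rightarrow> ('v \<Rightarrow> 'v) \<Rightarrow> bool" where
  "quaternionic I J K \<longleftrightarrow> linear I \<and> linear J \<and> linear K \<and>
     (\<forall>x. I (I x) = - x) \<and> (\<forall>x. J (J x) = - x) \<and>
     (\<forall>x. K x = I (J x)) \<and> (\<forall>x. K x = - J (I x)) \<and>
     (\<forall>A\<in>{I, J, K}. \<forall>x y. inner (A x) (A y) = inner x y)"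

definition bilin :: "'v::euclidean_space form2 \<Rightarrow> bool" where
  "bilin b \<longleftrightarrow> (\<forall>x. linear (b x)) \<and> (\<forall>y. linear (\<lambda>x. b x y))"

definition multilin4 :: "'v::euclidean_space form4 \<Rightarrow> bool" where
  "multilin4 R \<longleftrightarrow> (\<forall>y z u. linear (\<lambda>x. R x y z u)) \<and> (\<forall>x z u. linear (\<lambda>y. R x y z u)) \<and>
     (\<forall>x y u. linear (\<lambda>z. R x y z u)) \<and> (\<forall>x y z. linear (\<lambda>u. R x y z u))"

definition curv_tensors :: "'v::euclidean_space form4 set" where
  "curv_tensors = {R. multilin4 R \<and>
     (\<forall>x y z u. R x y z u = - R y x z u \<and> R x y z u = - R x y u z \<and> R x y z u = R z u x y \<and>
        R x y z u + R y z x u + R z x y u = 0)}"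

definition sumA :: "('v \<Rightarrow> 'v) \<Rightarrow> ('v \<Rightarrow> 'v) \<Rightarrow> ('v \<Rightarrow> 'v) \<Rightarrow> (('v \<Rightarrow> 'v) \<Rightarrow> real) \<Rightarrow> real" where
  "sumA I J K F = F I + F J + F K"

definition Ric :: "'v::euclidean_space form4 \<Rightarrow> 'v form2" where
  "Ric R = (\<lambda>x y. \<Sum>e\<in>Basis. R x e y e)"

definition RicQ :: "('v::euclidean_space \<Rightarrow> 'v) \<Rightarrow> ('v \<Rightarrow> 'v) \<Rightarrow> ('v \<Rightarrow> 'v) \<Rightarrow> 'v form4 \<Rightarrow> 'v form2" where
  "RicQ I J K R = (\<lambda>x y. sumA I J K (\<lambda>A. \<Sum>e\<in>Basis. R x e (A y) (A e)))"

definition act4 :: "('v \<Rightarrow> 'v) \<Rightarrow> nat \<Rightarrow> 'v form4 \<Rightarrow> 'v form4" where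
  "act4 A i R = (\<lambda>x y z u. - R (if i = 1 then A x else x) (if i = 2 then A y else y)
                              (if i = 3 then A z else z) (if i = 4 then A u else u))"

definition act2 :: "('v \<Rightarrow> 'v) \<Rightarrow> nat \<Rightarrow> 'v form2 \<Rightarrow> 'v form2" where
  "act2 A i b = (\<lambda>x y. - b (if i = 1 then A x else x) (if i = 2 then A y else y))"

definition actfull2 :: "('v \<Rightarrow> 'v) \<Rightarrow> 'v form2 \<Rightarrow> 'v form2" where
  "actfull2 A b = (\<lambda>x y. (-1) ^ 2 * b (A x) (A y))"

definition Lop :: "('v \<Rightarrow> 'v) \<Rightarrow> ('v \<Rightarrow> 'v) \<Rightarrow> ('v \<Rightarrow> 'v) \<Rightarrow> 'v form4 \<Rightarrow> 'v form4" where
  "Lop I J K R = (\<lambda>x y z u. sumA I J K (\<lambda>A.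
      \<Sum>i\<in>{1..4::nat}. \<Sum>j\<in>{i<..4}. act4 A i (act4 A j R) x y z u))"

definition sigma :: "'v form4 \<Rightarrow> 'v form4" where
  "sigma R = (\<lambda>x y z u. R z x y u)"

definition Lsig :: "('v \<Rightarrow> 'v) \<Rightarrow> ('v \<Rightarrow> 'v) \<Rightarrow> ('v \<Rightarrow> 'v) \<Rightarrow> 'v form4 \<Rightarrow> 'v form4" where
  "Lsig I J K R = (\<lambda>x y z u. sumA I J K (\<lambda>A.
       act4 A 1 (act4 A 2 R) x y z u
     + act4 A 2 (act4 A 3 (sigma R)) x y z u
     + act4 A 1 (act4 A 3 (sigma (sigma R))) x y z u
     + act4 A 3 (act4 A 4 R) x y z u
     + act4 A 1 (act4 A 4 (sigma R)) x y z u
     + act4 A 2 (act4 A 4 (sigma (sigma R))) x y z u))"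

definition tens :: "'v form2 \<Rightarrow> 'v form2 \<Rightarrow> 'v form4" where
  "tens b c = (\<lambda>x y z u. b x y * c z u)"

definition symprod :: "'v form2 \<Rightarrow> 'v form2 \<Rightarrow> 'v form4" where
  "symprod b c = (\<lambda>x y z u. (1/2) * (tens b c x y z u + tens c b x y z u))"

definition wedge :: "'v form2 \<Rightarrow> 'v form2 \<Rightarrow> 'v form4" where
  "wedge b c = (\<lambda>x y z u. b x y * c z u + b z u * c x y - b x z * c y u - b y u * c x z
                          + b x u * c y z + b y z * c x u)"

text \<open>psi(b \<otimes> c) for symmetric b, c.\<close>
definition psi :: "'v form2 \<Rightarrow> 'v form2 \<Rightarrow> 'v form4" where
  "psi b c = (\<lambda>x y z u. b x z * c y u - b x u * c y z + c x z * b y u - c x u * b y z)"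

definition Dop :: "('v \<Rightarrow> 'v) \<Rightarrow> 'v form2 \<Rightarrow> 'v form2" where
  "Dop A b = (\<lambda>x y. act2 A 1 b x y - act2 A 2 b x y)"

definition theta :: "('v \<Rightarrow> 'v) \<Rightarrow> ('v \<Rightarrow> 'v) \<Rightarrow> ('v \<Rightarrow> 'v) \<Rightarrow> 'v form2 \<Rightarrow> 'v form2 \<Rightarrow> 'v form4" where
  "theta I J K b c = (\<lambda>x y z u. sumA I J K (\<lambda>A.
      6 * symprod (Dop A b) (Dop A c) x y z u - wedge (Dop A b) (Dop A c) x y z u))"

definition omega :: "('v::real_inner \<Rightarrow> 'v) \<Rightarrow> 'v form2" where
  "omega A = (\<lambda>x y. inner x (A y))"

definition pi1 :: "'v::real_inner form4" where
  "pi1 = (\<lambda>x y z u. inner x z * inner y u - inner x u * inner y z)"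

definition pi2 :: "('v::real_inner \<Rightarrow> 'v) \<Rightarrow> ('v \<Rightarrow> 'v) \<Rightarrow> ('v \<Rightarrow> 'v) \<Rightarrow> 'v form4" where
  "pi2 I J K = (\<lambda>x y z u. sumA I J K (\<lambda>A.
      6 * symprod (omega A) (omega A) x y z u - wedge (omega A) (omega A) x y z u))"

definition Lambda20 :: "('v::euclidean_space \<Rightarrow> 'v) \<Rightarrow> ('v \<Rightarrow> 'v) \<Rightarrow> ('v \<Rightarrow> 'v) \<Rightarrow> 'v form2 set" where
  "Lambda20 I J K = {b. bilin b \<and> (\<forall>x y. b x y = b y x) \<and> (\<Sum>e\<in>Basis. b e e) = 0 \<and>
      (\<forall>A\<in>{I, J, K}. \<forall>x y. b (A x) (A y) = b x y)}"

end

theory Submission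
  imports Defs
begin

(* Parts (a) and (b) are explicit identities.  After expanding theta, psi, pi1 and pi2 and
   using the quaternionic relations (I^2 = -1, IJ = K, ..., skewness of I, J, K for g and
   for the invariant form b) they hold pointwise; the Ricci contractions are evaluated by the
   basis expansion  sum_e f(e) <e,w> = f(w)  for linear f.

   Part (c) is conceptual.  Each A in {I,J,K} acts on 4-forms as the derivation
   D_A = A_(1) + ... + A_(4), and D_A^2 = -4 + 2 M_A with M_A = sum_{i<j} A_(i) A_(j), so
   L = M_I + M_J + M_K and L(R) = 6R says sum_A D_A^2 R = 0.  Every A_(i) is skew-adjoint for
   the Euclidean inner product of 4-forms, hence sum_A |D_A R|^2 = 0 and D_A R = 0.
   Contracting D_A R = 0 shows that Ric(R) is A-invariant; contracting L_sigma(R) = 0 with the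
   Bianchi identity then gives Ric = Ric^q.  An invariant symmetric form is a multiple of g
   plus an element of Lambda^2_0 E. *)


section \<open>Bilinear forms and complex structures\<close>

lemma linear_times_const: "linear f \<Longrightarrow> linear (\<lambda>x. f x * (k::real))"
  by (rule linearI) (auto simp: real_vector.linear_add linear_cmul algebra_simps)

lemma const_times_linear: "linear f \<Longrightarrow> linear (\<lambda>x. (k::real) * f x)"
  by (rule linearI) (auto simp: real_vector.linear_add linear_cmul algebra_simps)

lemma basis_contract:
  fixes f :: "'v::euclidean_space \<Rightarrow> real"
  assumes "linear f"
  shows "(\<Sum>e\<in>Basis. f e * inner e w) = f w"
proof -
  have "f w = f (\<Sum>e\<in>Basis. inner w e *\<^sub>R e)" by (simp add: euclidean_representation)
  also have "\<dots> = (\<Sum>e\<in>Basis. inner w e * f e)"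
    by (simp add: real_vector.linear_sum[OF assms] linear_cmul[OF assms])
  finally show ?thesis by (simp add: inner_commute mult.commute)
qed

lemma bilin_linear_right: "bilin F \<Longrightarrow> linear (F p)"
  and bilin_linear_left: "bilin F \<Longrightarrow> linear (\<lambda>x. F x q)"
  by (auto simp: bilin_def)

lemma bilinI: "(\<And>q. linear (\<lambda>p. F p q)) \<Longrightarrow> (\<And>p. linear (\<lambda>q. F p q)) \<Longrightarrow> bilin F"
  unfolding bilin_def by auto

lemma bilin_product: "linear f \<Longrightarrow> linear g \<Longrightarrow> bilin (\<lambda>p q. f p * (g q :: real))"
  unfolding bilin_def by (auto intro: linear_times_const const_times_linear)

lemma bilin_sum: "(\<And>i. i \<in> S \<Longrightarrow> bilin (F i)) \<Longrightarrow> bilin (\<lambda>p q. \<Sum>i\<in>S. F i p q)"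
  unfolding bilin_def by (auto intro!: linear_compose_sum)

definition complex_structure :: "('v::euclidean_space \<Rightarrow> 'v) \<Rightarrow> bool" where
  "complex_structure A \<longleftrightarrow>
     linear A \<and> (\<forall>x. A (A x) = - x) \<and> (\<forall>x y. inner (A x) y = - inner x (A y))"

lemma complex_structureD:
  assumes "complex_structure A"
  shows "linear A" "A (A x) = - x" "inner (A x) y = - inner x (A y)"
    "A (x + y) = A x + A y" "A (c *\<^sub>R x) = c *\<^sub>R A x" "A (- x) = - A x"
  using assms
  by (auto simp: complex_structure_def real_vector.linear_add linear_cmul real_vector.linear_neg)

lemma trace_skew_swap:
  fixes A :: "'v::euclidean_space \<Rightarrow> 'v"
  assumes "complex_structure A" "bilin F"
  shows "(\<Sum>a\<in>Basis. F (A a) a) = - (\<Sum>a\<in>Basis. F a (A a))"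
proof -
  have skew: "inner b (A a) = - inner a (A b)" for a b
    using assms(1) unfolding complex_structure_def by (metis inner_commute)
  have "(\<Sum>a\<in>Basis. F (A a) a) = (\<Sum>a\<in>Basis. \<Sum>b\<in>Basis. F b a * inner b (A a))"
    using basis_contract[OF bilin_linear_left[OF assms(2)]] by simp
  also have "\<dots> = (\<Sum>b\<in>Basis. \<Sum>a\<in>Basis. F b a * inner b (A a))"
    by (rule sum.swap)
  also have "\<dots> = (\<Sum>b\<in>Basis. - (\<Sum>a\<in>Basis. F b a * inner a (A b)))"
  proof (rule sum.cong[OF refl])
    fix b
    show "(\<Sum>a\<in>Basis. F b a * inner b (A a)) = - (\<Sum>a\<in>Basis. F b a * inner a (A b))"
      by (simp add: skew[where b = b] sum_negf)
  qed
  also have "\<dots> = - (\<Sum>b\<in>Basis. F b (A b))"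
    using basis_contract[OF bilin_linear_right[OF assms(2)]] by (simp add: sum_negf)
  finally show ?thesis .
qed

lemma trace_conjugate:
  fixes A :: "'v::euclidean_space \<Rightarrow> 'v"
  assumes "complex_structure A" "bilin F"
  shows "(\<Sum>a\<in>Basis. F (A a) (A a)) = (\<Sum>a\<in>Basis. F a a)"
proof -
  have "bilin (\<lambda>p q. F p (A q))"
    using assms complex_structureD(1)[OF assms(1)] unfolding bilin_def
    by (auto intro: linear_compose[unfolded o_def])
  from trace_skew_swap[OF assms(1) this]
  have "(\<Sum>a\<in>Basis. F (A a) (A a)) = - (\<Sum>a\<in>Basis. F a (A (A a)))" by simp
  also have "\<dots> = (\<Sum>a\<in>Basis. F a a)"
    using bilin_linear_right[OF assms(2)]
    by (simp add: complex_structureD(2)[OF assms(1)] real_vector.linear_neg sum_negf)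
  finally show ?thesis .
qed


section \<open>Four-forms and the derivations \<open>D_A\<close>\<close>

lemma multilin4_linear:
  assumes "multilin4 S"
  shows "linear (\<lambda>x. S x y z u)" "linear (\<lambda>y. S x y z u)"
    "linear (\<lambda>z. S x y z u)" "linear (\<lambda>u. S x y z u)"
  using assms by (auto simp: multilin4_def)

lemma multilin4_simps:
  assumes "multilin4 S"
  shows "S (x1 + x2) y z u = S x1 y z u + S x2 y z u" "S x (y1 + y2) z u = S x y1 z u + S x y2 z u"
    "S x y (z1 + z2) u = S x y z1 u + S x y z2 u" "S x y z (u1 + u2) = S x y z u1 + S x y z u2"
    "S (c *\<^sub>R x) y z u = c * S x y z u" "S x (c *\<^sub>R y) z u = c * S x y z u"
    "S x y (c *\<^sub>R z) u = c * S x y z u" "S x y z (c *\<^sub>R u) = c * S x y z u"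
    "S (- x) y z u = - S x y z u" "S x (- y) z u = - S x y z u"
    "S x y (- z) u = - S x y z u" "S x y z (- u) = - S x y z u"
  using real_vector.linear_add[OF multilin4_linear(1)[OF assms, of y z u]]
    real_vector.linear_add[OF multilin4_linear(2)[OF assms, of x z u]]
    real_vector.linear_add[OF multilin4_linear(3)[OF assms, of x y u]]
    real_vector.linear_add[OF multilin4_linear(4)[OF assms, of x y z]]
    linear_cmul[OF multilin4_linear(1)[OF assms, of y z u]]
    linear_cmul[OF multilin4_linear(2)[OF assms, of x z u]]
    linear_cmul[OF multilin4_linear(3)[OF assms, of x y u]]
    linear_cmul[OF multilin4_linear(4)[OF assms, of x y z]]
    real_vector.linear_neg[OF multilin4_linear(1)[OF assms, of y z u]]
    real_vector.linear_neg[OF multilin4_linear(2)[OF assms, of x z u]]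
    real_vector.linear_neg[OF multilin4_linear(3)[OF assms, of x y u]]
    real_vector.linear_neg[OF multilin4_linear(4)[OF assms, of x y z]]
  by auto

lemma multilin4_act4:
  assumes "multilin4 S" "complex_structure A"
  shows "multilin4 (act4 A i S)"
  unfolding multilin4_def act4_def
  by (intro conjI allI linearI)
     (simp_all add: multilin4_simps[OF assms(1)] complex_structureD[OF assms(2)])

lemma multilin4_add4:
  assumes "multilin4 S1" "multilin4 S2" "multilin4 S3" "multilin4 S4"
  shows "multilin4 (\<lambda>x y z u. S1 x y z u + S2 x y z u + S3 x y z u + S4 x y z u)"
  unfolding multilin4_def
  by (intro conjI allI linearI)
     (simp_all add: multilin4_simps[OF assms(1)] multilin4_simps[OF assms(2)]
       multilin4_simps[OF assms(3)] multilin4_simps[OF assms(4)] algebra_simps)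

lemma multilin4_zero_on_Basis:
  assumes "multilin4 S"
    and "\<And>a b c d. a \<in> Basis \<Longrightarrow> b \<in> Basis \<Longrightarrow> c \<in> Basis \<Longrightarrow> d \<in> Basis \<Longrightarrow> S a b c d = 0"
  shows "S x y z u = 0"
proof -
  note expand = basis_contract[OF multilin4_linear(1)[OF assms(1)]]
    basis_contract[OF multilin4_linear(2)[OF assms(1)]]
    basis_contract[OF multilin4_linear(3)[OF assms(1)]]
    basis_contract[OF multilin4_linear(4)[OF assms(1)]]
  have "S a b c u = 0" if "a \<in> Basis" "b \<in> Basis" "c \<in> Basis" for a b c u
    using expand(4)[of a b c u, symmetric] assms(2) that by simp
  then have "S a b z u = 0" if "a \<in> Basis" "b \<in> Basis" for a b z u
    using expand(3)[of a b u z, symmetric] that by simp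
  then have "S a y z u = 0" if "a \<in> Basis" for a y z u
    using expand(2)[of a z u y, symmetric] that by simp
  then show ?thesis
    using expand(1)[of y z u x, symmetric] by simp
qed

definition inner4 :: "'v::euclidean_space form4 \<Rightarrow> 'v form4 \<Rightarrow> real" where
  "inner4 S T = (\<Sum>a\<in>Basis. \<Sum>b\<in>Basis. \<Sum>c\<in>Basis. \<Sum>d\<in>Basis. S a b c d * T a b c d)"

lemma inner4_self_nonneg: "inner4 S S \<ge> 0"
  unfolding inner4_def by (intro sum_nonneg) simp

lemma inner4_self_zero:
  assumes "inner4 S S = 0" "a \<in> Basis" "b \<in> Basis" "c \<in> Basis" "d \<in> Basis"
  shows "S a b c d = 0"
proof -
  have "(\<Sum>b\<in>Basis. \<Sum>c\<in>Basis. \<Sum>d\<in>Basis. S a b c d * S a b c d) = 0"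
    by (rule sum_nonneg_0[OF finite_Basis _ assms(1)[unfolded inner4_def] assms(2)])
       (intro sum_nonneg; simp)
  then have "(\<Sum>c\<in>Basis. \<Sum>d\<in>Basis. S a b c d * S a b c d) = 0"
    by (rule sum_nonneg_0[OF finite_Basis _ _ assms(3), rotated]) (intro sum_nonneg; simp)
  then have "(\<Sum>d\<in>Basis. S a b c d * S a b c d) = 0"
    by (rule sum_nonneg_0[OF finite_Basis _ _ assms(4), rotated]) (intro sum_nonneg; simp)
  then have "S a b c d * S a b c d = 0"
    by (rule sum_nonneg_0[OF finite_Basis _ _ assms(5), rotated]) simp
  then show ?thesis by simp
qed

lemma inner4_add4_left:
  "inner4 (\<lambda>x y z u. S1 x y z u + S2 x y z u + S3 x y z u + S4 x y z u) T
     = inner4 S1 T + inner4 S2 T + inner4 S3 T + inner4 S4 T"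
  by (simp add: inner4_def distrib_right sum.distrib)

lemma inner4_add4_right:
  "inner4 T (\<lambda>x y z u. S1 x y z u + S2 x y z u + S3 x y z u + S4 x y z u)
     = inner4 T S1 + inner4 T S2 + inner4 T S3 + inner4 T S4"
  by (simp add: inner4_def distrib_left sum.distrib)

lemma inner4_add3_right:
  "inner4 T (\<lambda>x y z u. S1 x y z u + S2 x y z u + S3 x y z u) = inner4 T S1 + inner4 T S2 + inner4 T S3"
  by (simp add: inner4_def distrib_left sum.distrib)

text \<open>Each \<open>A_(i)\<close> is skew-adjoint for \<open>inner4\<close>: the basis sum in slot \<open>i\<close> is a traced
  bilinear form, so \<open>trace_skew_swap\<close> applies.\<close>
lemma inner4_act4_adjoint_1:
  assumes "complex_structure A" "multilin4 S" "multilin4 T"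
  shows "inner4 (act4 A 1 S) T = - inner4 S (act4 A 1 T)"
proof -
  define F where "F = (\<lambda>p q. \<Sum>b\<in>Basis. \<Sum>c\<in>Basis. \<Sum>d\<in>Basis. S p b c d * T q b c d)"
  have "bilin F" unfolding F_def
    by (intro bilin_sum bilin_product multilin4_linear assms)
  have "inner4 (act4 A 1 S) T = - (\<Sum>a\<in>Basis. F (A a) a)"
    by (simp add: inner4_def act4_def F_def sum_negf)
  also have "\<dots> = (\<Sum>a\<in>Basis. F a (A a))"
    using trace_skew_swap[OF assms(1) \<open>bilin F\<close>] by simp
  also have "\<dots> = - inner4 S (act4 A 1 T)"
    by (simp add: inner4_def act4_def F_def sum_negf)
  finally show ?thesis .
qed

lemma inner4_act4_adjoint_2:
  assumes "complex_structure A" "multilin4 S" "multilin4 T"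
  shows "inner4 (act4 A 2 S) T = - inner4 S (act4 A 2 T)"
proof -
  define F where "F = (\<lambda>a p q. \<Sum>c\<in>Basis. \<Sum>d\<in>Basis. S a p c d * T a q c d)"
  have "bilin (F a)" for a unfolding F_def
    by (intro bilin_sum bilin_product multilin4_linear assms)
  have "inner4 (act4 A 2 S) T = - (\<Sum>a\<in>Basis. \<Sum>b\<in>Basis. F a (A b) b)"
    by (simp add: inner4_def act4_def F_def sum_negf)
  also have "\<dots> = (\<Sum>a\<in>Basis. \<Sum>b\<in>Basis. F a b (A b))"
    using trace_skew_swap[OF assms(1) \<open>bilin (F _)\<close>] by (simp add: sum_negf)
  also have "\<dots> = - inner4 S (act4 A 2 T)"
    by (simp add: inner4_def act4_def F_def sum_negf)
  finally show ?thesis .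
qed

lemma inner4_act4_adjoint_3:
  assumes "complex_structure A" "multilin4 S" "multilin4 T"
  shows "inner4 (act4 A 3 S) T = - inner4 S (act4 A 3 T)"
proof -
  define F where "F = (\<lambda>a b p q. \<Sum>d\<in>Basis. S a b p d * T a b q d)"
  have "bilin (F a b)" for a b unfolding F_def
    by (intro bilin_sum bilin_product multilin4_linear assms)
  have "inner4 (act4 A 3 S) T = - (\<Sum>a\<in>Basis. \<Sum>b\<in>Basis. \<Sum>c\<in>Basis. F a b (A c) c)"
    by (simp add: inner4_def act4_def F_def sum_negf)
  also have "\<dots> = (\<Sum>a\<in>Basis. \<Sum>b\<in>Basis. \<Sum>c\<in>Basis. F a b c (A c))"
    using trace_skew_swap[OF assms(1) \<open>bilin (F _ _)\<close>] by (simp add: sum_negf)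
  also have "\<dots> = - inner4 S (act4 A 3 T)"
    by (simp add: inner4_def act4_def F_def sum_negf)
  finally show ?thesis .
qed

lemma inner4_act4_adjoint_4:
  assumes "complex_structure A" "multilin4 S" "multilin4 T"
  shows "inner4 (act4 A 4 S) T = - inner4 S (act4 A 4 T)"
proof -
  define F where "F = (\<lambda>a b c p q. S a b c p * T a b c q)"
  have "bilin (F a b c)" for a b c unfolding F_def
    by (intro bilin_product multilin4_linear assms)
  have "inner4 (act4 A 4 S) T
      = - (\<Sum>a\<in>Basis. \<Sum>b\<in>Basis. \<Sum>c\<in>Basis. \<Sum>d\<in>Basis. F a b c (A d) d)"
    by (simp add: inner4_def act4_def F_def sum_negf)
  also have "\<dots> = (\<Sum>a\<in>Basis. \<Sum>b\<in>Basis. \<Sum>c\<in>Basis. \<Sum>d\<in>Basis. F a b c d (A d))"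
    using trace_skew_swap[OF assms(1) \<open>bilin (F _ _ _)\<close>] by (simp add: sum_negf)
  also have "\<dots> = - inner4 S (act4 A 4 T)"
    by (simp add: inner4_def act4_def F_def sum_negf)
  finally show ?thesis .
qed

definition deriv4 :: "('v \<Rightarrow> 'v) \<Rightarrow> 'v form4 \<Rightarrow> 'v form4" where
  "deriv4 A S = (\<lambda>x y z u.
     act4 A 1 S x y z u + act4 A 2 S x y z u + act4 A 3 S x y z u + act4 A 4 S x y z u)"

definition pair_act4 :: "('v \<Rightarrow> 'v) \<Rightarrow> 'v form4 \<Rightarrow> 'v form4" where
  "pair_act4 A S = (\<lambda>x y z u.
       act4 A 1 (act4 A 2 S) x y z u + act4 A 1 (act4 A 3 S) x y z u + act4 A 1 (act4 A 4 S) x y z u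
     + act4 A 2 (act4 A 3 S) x y z u + act4 A 2 (act4 A 4 S) x y z u + act4 A 3 (act4 A 4 S) x y z u)"

lemma sum_pairs4:
  "(\<Sum>i\<in>{1..4::nat}. \<Sum>j\<in>{i<..4}. f i j) = f 1 2 + f 1 3 + f 1 4 + f 2 3 + f 2 4 + (f 3 4 :: real)"
proof -
  have "{1..4::nat} = {1,2,3,4}" "{Suc 0<..4::nat} = {2,3,4}" "{2<..4::nat} = {3,4}"
    "{3<..4::nat} = {4}" "{4<..4::nat} = {}" by auto
  then show ?thesis by simp
qed

lemma Lop_eq_pair_act4:
  "Lop I J K S x y z u = pair_act4 I S x y z u + pair_act4 J S x y z u + pair_act4 K S x y z u"
  unfolding Lop_def sumA_def sum_pairs4 pair_act4_def by simp

lemma multilin4_deriv4: "complex_structure A \<Longrightarrow> multilin4 S \<Longrightarrow> multilin4 (deriv4 A S)"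
  unfolding deriv4_def by (intro multilin4_add4 multilin4_act4)

text \<open>Since \<open>A_(i)^2 = -1\<close> and the \<open>A_(i)\<close> commute, \<open>D_A^2 = -4 + 2 M_A\<close>.\<close>
lemma deriv4_square:
  assumes "complex_structure A" "multilin4 S"
  shows "deriv4 A (deriv4 A S) x y z u = -4 * S x y z u + 2 * pair_act4 A S x y z u"
  unfolding deriv4_def pair_act4_def act4_def
  by (simp add: multilin4_simps[OF assms(2)] complex_structureD[OF assms(1)])

text \<open>\<open>D_A\<close> is skew-adjoint, so \<open><S, D_A^2 S> = -|D_A S|^2\<close>.\<close>
lemma inner4_deriv4_square:
  assumes "complex_structure A" "multilin4 S"
  shows "inner4 (deriv4 A S) (deriv4 A S) = - inner4 S (deriv4 A (deriv4 A S))"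
proof -
  have m: "multilin4 (deriv4 A S)" by (rule multilin4_deriv4[OF assms])
  have "inner4 (deriv4 A S) (deriv4 A S)
      = inner4 (act4 A 1 S) (deriv4 A S) + inner4 (act4 A 2 S) (deriv4 A S)
        + inner4 (act4 A 3 S) (deriv4 A S) + inner4 (act4 A 4 S) (deriv4 A S)"
    by (subst (1) deriv4_def) (rule inner4_add4_left)
  also have "\<dots> = - (inner4 S (act4 A 1 (deriv4 A S)) + inner4 S (act4 A 2 (deriv4 A S))
        + inner4 S (act4 A 3 (deriv4 A S)) + inner4 S (act4 A 4 (deriv4 A S)))"
    using inner4_act4_adjoint_1[OF assms m] inner4_act4_adjoint_2[OF assms m]
      inner4_act4_adjoint_3[OF assms m] inner4_act4_adjoint_4[OF assms m] by linarith
  also have "\<dots> = - inner4 S (deriv4 A (deriv4 A S))"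
    by (subst (2) deriv4_def) (simp add: inner4_add4_right)
  finally show ?thesis .
qed

text \<open>Key step of (c): the eigenvalue equation \<open>L(R) = 6R\<close> forces \<open>D_A R = 0\<close> for
  \<open>A = I, J, K\<close>, because it says \<open>sum_A D_A^2 R = 0\<close>, i.e. \<open>sum_A |D_A R|^2 = 0\<close>.\<close>
lemma Lop_eigen_imp_deriv4_zero:
  assumes cI: "complex_structure I" and cJ: "complex_structure J" and cK: "complex_structure K"
    and m: "multilin4 R" and L: "Lop I J K R = (\<lambda>x y z u. 6 * R x y z u)"
    and A: "A \<in> {I, J, K}"
  shows "deriv4 A R x y z u = 0"
proof -
  have pointwise: "deriv4 I (deriv4 I R) x y z u + deriv4 J (deriv4 J R) x y z u
      + deriv4 K (deriv4 K R) x y z u = 0" for x y z u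
  proof -
    have "Lop I J K R x y z u = 6 * R x y z u" using L by meson
    then show ?thesis
      unfolding deriv4_square[OF cI m] deriv4_square[OF cJ m] deriv4_square[OF cK m] Lop_eq_pair_act4
      by simp
  qed
  have "inner4 R (\<lambda>x y z u. deriv4 I (deriv4 I R) x y z u + deriv4 J (deriv4 J R) x y z u
      + deriv4 K (deriv4 K R) x y z u) = 0"
    by (simp only: pointwise) (simp add: inner4_def)
  then have "inner4 R (deriv4 I (deriv4 I R)) + inner4 R (deriv4 J (deriv4 J R))
      + inner4 R (deriv4 K (deriv4 K R)) = 0"
    by (simp only: inner4_add3_right)
  then have "inner4 (deriv4 I R) (deriv4 I R) + inner4 (deriv4 J R) (deriv4 J R)
      + inner4 (deriv4 K R) (deriv4 K R) = 0"
    by (simp add: inner4_deriv4_square[OF cI m] inner4_deriv4_square[OF cJ m]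
        inner4_deriv4_square[OF cK m])
  then have "inner4 (deriv4 I R) (deriv4 I R) = 0" "inner4 (deriv4 J R) (deriv4 J R) = 0"
    "inner4 (deriv4 K R) (deriv4 K R) = 0"
    using inner4_self_nonneg[of "deriv4 I R"] inner4_self_nonneg[of "deriv4 J R"]
      inner4_self_nonneg[of "deriv4 K R"] by linarith+
  then have zero: "inner4 (deriv4 A R) (deriv4 A R) = 0" and cA: "complex_structure A"
    using A cI cJ cK by auto
  show ?thesis
    by (rule multilin4_zero_on_Basis[OF multilin4_deriv4[OF cA m]]) (rule inner4_self_zero[OF zero])
qed

section \<open>Curvature tensors annihilated by a derivation \<open>D_A\<close>\<close>

text \<open>The twisted Ricci contraction \<open>sum_e R(x,e,y,Ae)\<close>; for \<open>A = I, J, K\<close> these are the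
  three summands of \<open>Ric^q\<close>.\<close>
definition twisted_ric :: "('v \<Rightarrow> 'v) \<Rightarrow> 'v::euclidean_space form4 \<Rightarrow> 'v form2" where
  "twisted_ric A R = (\<lambda>x y. \<Sum>e\<in>Basis. R x e y (A e))"

lemma bilin_Ric: "multilin4 R \<Longrightarrow> bilin (Ric R)"
  unfolding Ric_def by (intro bilinI linear_compose_sum ballI multilin4_linear)

definition Lsig_term :: "('v \<Rightarrow> 'v) \<Rightarrow> 'v form4 \<Rightarrow> 'v form4" where
  "Lsig_term A R = (\<lambda>x y z u.
       act4 A 1 (act4 A 2 R) x y z u
     + act4 A 2 (act4 A 3 (sigma R)) x y z u
     + act4 A 1 (act4 A 3 (sigma (sigma R))) x y z u
     + act4 A 3 (act4 A 4 R) x y z u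
     + act4 A 1 (act4 A 4 (sigma R)) x y z u
     + act4 A 2 (act4 A 4 (sigma (sigma R))) x y z u)"

lemma Lsig_eq_Lsig_term:
  "Lsig I J K R x y z u = Lsig_term I R x y z u + Lsig_term J R x y z u + Lsig_term K R x y z u"
  unfolding Lsig_def Lsig_term_def sumA_def by simp

locale curvature_tensor =
  fixes R :: "'v::euclidean_space form4"
  assumes curv: "R \<in> curv_tensors"
begin

lemma multilin: "multilin4 R"
  using curv unfolding curv_tensors_def by blast

lemma skew12: "R x y z u = - R y x z u" and skew34: "R x y z u = - R x y u z"
  and pair_sym: "R x y z u = R z u x y" and bianchi: "R x y z u + R y z x u + R z x y u = 0"
  using curv unfolding curv_tensors_def by blast+

lemma bilin_24: "bilin (\<lambda>s t. R p s q t)"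
  and bilin_34: "bilin (\<lambda>s t. R p q s t)"
  and bilin_14: "bilin (\<lambda>s t. R s p q t)"
  by (rule bilinI; rule multilin4_linear[OF multilin])+

lemma Ric_sym: "Ric R y x = Ric R x y"
  unfolding Ric_def by (simp add: pair_sym[of y])

lemma Ric_neg_right: "Ric R x (- y) = - Ric R x y"
  unfolding Ric_def by (simp add: multilin4_simps[OF multilin] sum_negf)

lemma contract_twist_2:
  "complex_structure A \<Longrightarrow> (\<Sum>e\<in>Basis. R p (A e) q e) = - twisted_ric A R p q"
  using trace_skew_swap[OF _ bilin_24, of A p q] by (simp add: twisted_ric_def)

lemma contract_twist_24:
  "complex_structure A \<Longrightarrow> (\<Sum>e\<in>Basis. R p (A e) q (A e)) = Ric R p q"
  using trace_conjugate[OF _ bilin_24, of A p q] by (simp add: Ric_def)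

lemma contract_twist_14:
  assumes "complex_structure A"
  shows "(\<Sum>e\<in>Basis. R (A e) y x (A e)) = - Ric R x y"
proof -
  have "(\<Sum>e\<in>Basis. R (A e) y x (A e)) = (\<Sum>e\<in>Basis. R e y x e)"
    using trace_conjugate[OF assms bilin_14, of y x] by simp
  also have "\<dots> = - Ric R y x" unfolding Ric_def using skew12[of _ y] by (simp add: sum_negf)
  finally show ?thesis by (simp add: Ric_sym)
qed

lemma contract_13:
  "(\<Sum>e\<in>Basis. R e w v e) = - Ric R v w"
proof -
  have "R e w v e = - R v e w e" for e using pair_sym[of e] skew34[of v e e] by simp
  then show ?thesis by (simp add: Ric_def sum_negf)
qed

lemma twisted_ric_antisym:
  assumes "complex_structure A"
  shows "twisted_ric A R y x = - twisted_ric A R x y"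
proof -
  have "twisted_ric A R y x = (\<Sum>e\<in>Basis. R x (A e) y e)"
    unfolding twisted_ric_def by (simp add: pair_sym[of y])
  then show ?thesis using contract_twist_2[OF assms] by simp
qed

text \<open>Two contractions of the Bianchi identity, expressing the remaining terms of
  \<open>L_sigma\<close> through \<open>twisted_ric\<close>.\<close>
lemma bianchi_contract_34:
  assumes "complex_structure A"
  shows "(\<Sum>e\<in>Basis. R w x (A e) e) = twisted_ric A R x w - twisted_ric A R w x"
proof -
  have "(\<Sum>e\<in>Basis. R w x (A e) e) = - (\<Sum>e\<in>Basis. R w x e (A e))"
    using trace_skew_swap[OF assms bilin_34, of w x] by simp
  also have "\<dots> = - (\<Sum>e\<in>Basis. - R x e w (A e) + R w e x (A e))"
  proof -
    have "R w x e (A e) = - R x e w (A e) + R w e x (A e)" for e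
      using bianchi[of w x e "A e"] skew12[of e w] by simp
    then show ?thesis by simp
  qed
  also have "\<dots> = twisted_ric A R x w - twisted_ric A R w x"
    by (simp add: twisted_ric_def sum.distrib sum_negf sum_subtractf)
  finally show ?thesis .
qed

lemma bianchi_contract_3:
  "(\<Sum>e\<in>Basis. R y v e (A e)) = twisted_ric A R y v - twisted_ric A R v y"
proof -
  have "R y v e (A e) = - R v e y (A e) + R y e v (A e)" for e
    using bianchi[of y v e "A e"] skew12[of e y] by simp
  then show ?thesis by (simp add: twisted_ric_def sum_subtractf)
qed

context
  fixes A
  assumes cA: "complex_structure A" and annihilated: "\<And>x y z u. deriv4 A R x y z u = 0"
begin

lemma Ric_skew: "Ric R (A x) y = - Ric R x (A y)"
proof -
  have "R (A x) e y e + R x (A e) y e + R x e (A y) e + R x e y (A e) = 0" for e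
    using annihilated[of x e y e] by (simp add: deriv4_def act4_def; linarith)
  then have "Ric R (A x) y + (\<Sum>e\<in>Basis. R x (A e) y e) + Ric R x (A y) + twisted_ric A R x y = 0"
    by (simp add: sum.distrib Ric_def twisted_ric_def flip: sum.distrib)
  then show ?thesis using contract_twist_2[OF cA] by simp
qed

lemma twisted_ric_skew: "twisted_ric A R (A x) y = - twisted_ric A R x (A y)"
proof -
  have "R (A x) e y (A e) + R x (A e) y (A e) + R x e (A y) (A e) + R x e y (A (A e)) = 0" for e
    using annihilated[of x e y "A e"] by (simp add: deriv4_def act4_def; linarith)
  then have "(\<Sum>e\<in>Basis. R (A x) e y (A e) + R x (A e) y (A e) + R x e (A y) (A e)
      + R x e y (A (A e))) = 0"
    by simp
  then have "twisted_ric A R (A x) y + (\<Sum>e\<in>Basis. R x (A e) y (A e)) + twisted_ric A R x (A y)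
      - Ric R x y = 0"
    by (simp add: sum.distrib Ric_def twisted_ric_def complex_structureD[OF cA]
        multilin4_simps[OF multilin] sum_negf sum_subtractf)
  then show ?thesis using contract_twist_24[OF cA] by simp
qed

lemma Ric_invariant: "Ric R (A x) (A y) = Ric R x y"
  using Ric_skew[of x "A y"] by (simp add: complex_structureD[OF cA] Ric_neg_right)

lemma Lsig_term_contract:
  "(\<Sum>e\<in>Basis. Lsig_term A R x e y e) = 6 * twisted_ric A R x (A y) - 2 * Ric R x y"
proof -
  have "(\<Sum>e\<in>Basis. Lsig_term A R x e y e) =
     (\<Sum>e\<in>Basis. R (A x) (A e) y e) + (\<Sum>e\<in>Basis. R (A y) x (A e) e) + (\<Sum>e\<in>Basis. R e (A y) (A x) e)
     + (\<Sum>e\<in>Basis. R x e (A y) (A e)) + (\<Sum>e\<in>Basis. R y (A x) e (A e)) + (\<Sum>e\<in>Basis. R (A e) y x (A e))"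
    by (simp add: Lsig_term_def act4_def Defs.sigma_def sum.distrib)
  also have "\<dots> = - twisted_ric A R (A x) y
      + (twisted_ric A R x (A y) - twisted_ric A R (A y) x) - Ric R (A x) (A y)
      + twisted_ric A R x (A y) + (twisted_ric A R y (A x) - twisted_ric A R (A x) y) - Ric R x y"
    by (simp add: contract_twist_2[OF cA] bianchi_contract_34[OF cA] contract_13
        bianchi_contract_3 contract_twist_14[OF cA] twisted_ric_def)
  also have "\<dots> = 6 * twisted_ric A R x (A y) - 2 * Ric R x y"
    using twisted_ric_antisym[OF cA, of "A y" x] twisted_ric_antisym[OF cA, of "A x" y]
      twisted_ric_skew[of x y] Ric_invariant[of x y] by linarith
  finally show ?thesis .
qed

end

end


section \<open>The quaternionic structure and the explicit tensors\<close>

locale quaternionic_structure =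
  fixes I J K :: "'v::euclidean_space \<Rightarrow> 'v"
  assumes quat: "quaternionic I J K"
begin

lemma linear_IJK: "linear I" "linear J" "linear K"
  using quat by (auto simp: quaternionic_def)

lemma quat_relations: "I (I x) = - x" "J (J x) = - x" "K x = I (J x)" "K x = - J (I x)"
  using quat unfolding quaternionic_def by blast+

lemma additive_IJK: "I (x + y) = I x + I y" "J (x + y) = J x + J y" "K (x + y) = K x + K y"
  using linear_IJK by (auto simp: real_vector.linear_add)

lemma scale_IJK: "I (c *\<^sub>R x) = c *\<^sub>R I x" "J (c *\<^sub>R x) = c *\<^sub>R J x" "K (c *\<^sub>R x) = c *\<^sub>R K x"
  using linear_IJK by (auto simp: linear_cmul)

lemma neg_IJK [simp]: "I (- x) = - I x" "J (- x) = - J x" "K (- x) = - K x"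
  using linear_IJK by (auto simp: real_vector.linear_neg)

lemma II [simp]: "I (I x) = - x" and JJ [simp]: "J (J x) = - x" and IJ [simp]: "I (J x) = K x"
  using quat_relations[of x] by auto

lemma JI [simp]: "J (I x) = - K x"
  using quat_relations(4)[of x] by (metis minus_minus)

lemma KJ [simp]: "K (J x) = - I x"
  using quat_relations(3)[of "J x"] by simp

lemma JK [simp]: "J (K x) = I x"
  using quat_relations(3)[of "J x"] by (metis JI JJ minus_minus neg_IJK(1) quat_relations(3))

lemma KI [simp]: "K (I x) = J x"
  using quat_relations(4)[of "I x"] by simp

lemma IK [simp]: "I (K x) = - J x"
  using quat_relations(3)[of x] by (metis II)

lemma KK [simp]: "K (K x) = - x"
  using quat_relations(3)[of "K x"] by simp

lemma orthogonal: "A \<in> {I, J, K} \<Longrightarrow> inner (A x) (A y) = inner x y"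
  using quat by (auto simp: quaternionic_def)

lemma skew_I [simp]: "inner (I x) y = - inner x (I y)"
  and skew_J [simp]: "inner (J x) y = - inner x (J y)"
  and skew_K [simp]: "inner (K x) y = - inner x (K y)"
  using orthogonal[of I x "I y"] orthogonal[of J x "J y"] orthogonal[of K x "K y"] by simp_all

text \<open>Normal forms for the fundamental 2-forms \<open>omega_A(x, y) = <x, A y>\<close>: swapping the arguments
  changes the sign, so each unordered pair of arguments has one canonical orientation.\<close>
lemma omega_swap: "inner y (I x) = - inner x (I y)" "inner y (J x) = - inner x (J y)"
  "inner y (K x) = - inner x (K y)"
  by (metis inner_commute skew_I skew_J skew_K)+

lemma omega_diag [simp]: "inner x (I x) = 0" "inner x (J x) = 0" "inner x (K x) = 0"
  using omega_swap[of x x] by simp_all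

lemma complex_structure_IJK: "A \<in> {I, J, K} \<Longrightarrow> complex_structure A"
  using linear_IJK by (auto simp: complex_structure_def)

lemma Dop_inner: "Dop I inner x y = 2 * inner x (I y)" "Dop J inner x y = 2 * inner x (J y)"
  "Dop K inner x y = 2 * inner x (K y)"
  by (simp_all add: Dop_def act2_def)

lemma theta_psi_inner:
  "theta I J K inner inner x y z u + 12 * psi inner inner x y z u = 4 * (pi2 I J K x y z u + 6 * pi1 x y z u)"
  unfolding theta_def psi_def symprod_def tens_def wedge_def sumA_def pi2_def pi1_def omega_def
  by (simp add: Dop_inner field_simps)

text \<open>Contraction through a quaternion unit: \<open>sum_e f(Ae) <e, Ax> = f(A^2 x) = -f(x)\<close>.\<close>
lemma contract_twice:
  assumes "A \<in> {I, J, K}" "linear f"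
  shows "(\<Sum>e\<in>Basis. f (A e) * inner e (A x)) = - f x"
proof -
  have "linear A" using assms linear_IJK by auto
  then have "(\<Sum>e\<in>Basis. f (A e) * inner e (A x)) = f (A (A x))"
    by (intro basis_contract linear_compose[OF _ assms(2), unfolded o_def])
  also have "\<dots> = - f x" using assms by (auto simp: real_vector.linear_neg)
  finally show ?thesis .
qed

lemma Ric_pi: "Ric (\<lambda>x y z u. pi2 I J K x y z u + 6 * pi1 x y z u) x y
    = 6 * real DIM('v) * inner x y + 12 * inner x y"
proof -
  have pointwise: "pi2 I J K x e y e + 6 * pi1 x e y e =
     - 6 * (inner y (I e) * inner e (I x)) - 6 * (inner y (J e) * inner e (J x))
     - 6 * (inner y (K e) * inner e (K x)) + 6 * (inner x y * inner e e) - 6 * (inner e x * inner e y)"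
    for e
    unfolding symprod_def tens_def wedge_def sumA_def pi2_def pi1_def omega_def
    by (simp add: omega_swap[of x e] omega_swap[of e y] inner_commute[of x e] inner_commute[of y e]
        field_simps)
  have lin_y: "linear (inner y)" by (rule bounded_linear.linear[OF bounded_linear_inner_right])
  have lin_left: "linear (\<lambda>e. inner e w)" for w
    by (rule bounded_linear.linear[OF bounded_linear_inner_left])
  have "Ric (\<lambda>x y z u. pi2 I J K x y z u + 6 * pi1 x y z u) x y =
     - 6 * (\<Sum>e\<in>Basis. inner y (I e) * inner e (I x)) - 6 * (\<Sum>e\<in>Basis. inner y (J e) * inner e (J x))
     - 6 * (\<Sum>e\<in>Basis. inner y (K e) * inner e (K x))
     + 6 * (inner x y * (\<Sum>e\<in>Basis. inner e (e::'v))) - 6 * (\<Sum>e\<in>Basis. inner e x * inner e y)"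
    unfolding Ric_def pointwise by (simp add: sum.distrib sum_subtractf sum_distrib_left)
  also have "\<dots> = 6 * real DIM('v) * inner x y + 12 * inner x y"
    by (simp add: contract_twice[OF _ lin_y] basis_contract[OF lin_left] inner_Basis
        inner_commute[of y x])
  finally show ?thesis .
qed

end

lemma six_symprod: "6 * symprod f h x y z u - w = 3 * (f x y * h z u + h x y * f z u) - w"
  by (simp add: symprod_def tens_def)

locale quaternionic_form = quaternionic_structure +
  fixes b :: "'v::euclidean_space form2"
  assumes bilin_b: "bilin b" and b_sym: "b x y = b y x"
    and b_I: "b (I x) (I y) = b x y" and b_J: "b (J x) (J y) = b x y" and b_K: "b (K x) (K y) = b x y"
begin

lemma b_neg [simp]: "b (- x) y = - b x y" "b x (- y) = - b x y"
  using real_vector.linear_neg[OF bilin_linear_left[OF bilin_b, of y]]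
    real_vector.linear_neg[OF bilin_linear_right[OF bilin_b, of x]]
  by simp_all

lemma b_linear: "b (x + y) z = b x z + b y z" "b z (x + y) = b z x + b z y"
  "b (c *\<^sub>R x) z = c * b x z" "b z (c *\<^sub>R x) = c * b z x"
  using real_vector.linear_add[OF bilin_linear_left[OF bilin_b, of z]]
    real_vector.linear_add[OF bilin_linear_right[OF bilin_b, of z]]
    linear_cmul[OF bilin_linear_left[OF bilin_b, of z]]
    linear_cmul[OF bilin_linear_right[OF bilin_b, of z]]
  by simp_all

text \<open>Invariance of \<open>b\<close> makes \<open>b(., A .)\<close> skew, like \<open>omega_A\<close>.\<close>
lemma b_skew [simp]: "b (I x) y = - b x (I y)" "b (J x) y = - b x (J y)" "b (K x) y = - b x (K y)"
  using b_I[of x "I y"] b_J[of x "J y"] b_K[of x "K y"] by simp_all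

lemma b_swap: "b y (I x) = - b x (I y)" "b y (J x) = - b x (J y)" "b y (K x) = - b x (K y)"
  by (metis b_sym b_skew)+

lemma b_diag [simp]: "b x (I x) = 0" "b x (J x) = 0" "b x (K x) = 0"
  using b_swap[of x x] by simp_all

lemma Dop_form: "Dop I b x y = 2 * b x (I y)" "Dop J b x y = 2 * b x (J y)" "Dop K b x y = 2 * b x (K y)"
  by (simp_all add: Dop_def act2_def)

definition Rb :: "'v form4" where
  "Rb = (\<lambda>x y z u. theta I J K b inner x y z u + 12 * psi b inner x y z u)"

text \<open>Normal forms for rewriting \<open>Rb\<close>: every occurrence of \<open>omega_A\<close>, \<open>b(., A .)\<close>, \<open>b\<close> and
  \<open>g\<close> is oriented by the order of the arguments \<open>x, y, z, u\<close>.\<close>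
lemmas orient = omega_swap[of _ x] b_swap[of _ x] b_sym[of _ x] inner_commute[of _ x] for x

text \<open>The \<open>A\<close>-summand of \<open>theta(b \<otimes> g)\<close>, divided by 4.\<close>
definition Rb_term :: "('v \<Rightarrow> 'v) \<Rightarrow> 'v form4" where
  "Rb_term A x y z u = 2 * b x (A y) * inner z (A u) + 2 * inner x (A y) * b z (A u)
    + b x (A z) * inner y (A u) + b y (A u) * inner x (A z)
    - b x (A u) * inner y (A z) - b y (A z) * inner x (A u)"

lemma Rb_expand: "Rb x y z u = 4 * (Rb_term I x y z u + Rb_term J x y z u + Rb_term K x y z u)
   + 12 * (b x z * inner y u - b x u * inner y z + inner x z * b y u - inner x u * b y z)"
  unfolding Rb_def theta_def psi_def symprod_def tens_def wedge_def sumA_def Rb_term_def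
  by (simp add: Dop_form Dop_inner field_simps)

lemma multilin4_Rb: "multilin4 Rb"
  unfolding multilin4_def
  by (intro conjI allI linearI)
     (simp_all add: Rb_expand Rb_term_def additive_IJK scale_IJK b_linear inner_add_left
       inner_add_right algebra_simps)

lemma Rb_curvature_identities: "Rb x y z u = - Rb y x z u" "Rb x y z u = - Rb x y u z"
  "Rb x y z u = Rb z u x y" "Rb x y z u + Rb y z x u + Rb z x y u = 0"
  unfolding Rb_def theta_def psi_def six_symprod wedge_def sumA_def
  by (simp_all add: Dop_form Dop_inner orient[of y x] orient[of z x] orient[of u x]
      orient[of z y] orient[of u y] orient[of u z] algebra_simps)

lemma Lop_Rb: "Lop I J K Rb x y z u = 6 * Rb x y z u"
  unfolding Lop_def sumA_def sum_pairs4 act4_def Rb_expand Rb_term_def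
  by (simp add: orient[of y x] orient[of z x] orient[of u x] orient[of z y] orient[of u y]
      orient[of u z] algebra_simps)

lemma Lsig_Rb: "Lsig I J K Rb x y z u = 0"
  unfolding Lsig_def sumA_def act4_def Defs.sigma_def Rb_def theta_def psi_def six_symprod wedge_def
  by (simp add: Dop_form Dop_inner orient[of y x] orient[of z x] orient[of u x] orient[of z y]
      orient[of u y] orient[of u z])

lemma Ric_Rb:
  assumes "(\<Sum>e\<in>Basis. b e e) = 0"
  shows "Ric Rb x y = 12 * real DIM('v) * b x y + 48 * b x y"
proof -
  have pointwise: "Rb x e y e =
     - 12 * (b x (I e) * inner e (I y)) - 12 * (b y (I e) * inner e (I x))
     - 12 * (b x (J e) * inner e (J y)) - 12 * (b y (J e) * inner e (J x))
     - 12 * (b x (K e) * inner e (K y)) - 12 * (b y (K e) * inner e (K x))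
     + 12 * (b x y * inner e e) - 12 * (b x e * inner e y) + 12 * (inner x y * b e e)
     - 12 * (b y e * inner e x)" for e
    unfolding Rb_expand Rb_term_def
    by (simp add: b_swap[of e x] b_swap[of e y] omega_swap[of x e] omega_swap[of y e]
        b_sym[of e x] b_sym[of e y] inner_commute[of x e] inner_commute[of y e] algebra_simps)
  have lin: "linear (b x)" "linear (b y)" using bilin_linear_right[OF bilin_b] by auto
  have "Ric Rb x y =
     - 12 * (\<Sum>e\<in>Basis. b x (I e) * inner e (I y)) - 12 * (\<Sum>e\<in>Basis. b y (I e) * inner e (I x))
     - 12 * (\<Sum>e\<in>Basis. b x (J e) * inner e (J y)) - 12 * (\<Sum>e\<in>Basis. b y (J e) * inner e (J x))
     - 12 * (\<Sum>e\<in>Basis. b x (K e) * inner e (K y)) - 12 * (\<Sum>e\<in>Basis. b y (K e) * inner e (K x))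
     + 12 * (b x y * (\<Sum>e\<in>Basis. inner e (e::'v))) - 12 * (\<Sum>e\<in>Basis. b x e * inner e y)
     + 12 * (inner x y * (\<Sum>e\<in>Basis. b e e)) - 12 * (\<Sum>e\<in>Basis. b y e * inner e x)"
    unfolding Ric_def pointwise by (simp add: sum.distrib sum_subtractf sum_distrib_left)
  also have "\<dots> = 12 * real DIM('v) * b x y + 48 * b x y"
    by (simp add: contract_twice[OF _ lin(1)] contract_twice[OF _ lin(2)] basis_contract[OF lin(1)]
        basis_contract[OF lin(2)] inner_Basis assms b_sym[of y x])
  finally show ?thesis .
qed

lemma Rb_properties:
  assumes "(\<Sum>e\<in>Basis. b e e) = 0"
  shows "Rb \<in> curv_tensors" "Lop I J K Rb = (\<lambda>x y z u. 6 * Rb x y z u)"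
    "Lsig I J K Rb = (\<lambda>x y z u. 0)" "Ric Rb = (\<lambda>x y. 12 * real DIM('v) * b x y + 48 * b x y)"
  using multilin4_Rb Rb_curvature_identities unfolding curv_tensors_def mem_Collect_eq
  by blast (intro ext Lop_Rb Lsig_Rb Ric_Rb[OF assms])+

end

section \<open>Part (c): the Ricci form of an eigentensor\<close>

context quaternionic_structure
begin

lemma eigen_annihilated:
  assumes R: "R \<in> curv_tensors" and L: "Lop I J K R = (\<lambda>x y z u. 6 * R x y z u)"
    and A: "A \<in> {I, J, K}"
  shows "deriv4 A R x y z u = 0"
  using Lop_eigen_imp_deriv4_zero[OF complex_structure_IJK complex_structure_IJK
      complex_structure_IJK curvature_tensor.multilin[OF curvature_tensor.intro[OF R]] L A]
  by simp

lemma eigen_Ric_invariant: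
  assumes R: "R \<in> curv_tensors" and L: "Lop I J K R = (\<lambda>x y z u. 6 * R x y z u)"
    and A: "A \<in> {I, J, K}"
  shows "Ric R (A x) (A y) = Ric R x y"
  by (rule curvature_tensor.Ric_invariant[OF curvature_tensor.intro[OF R]
        complex_structure_IJK[OF A] eigen_annihilated[OF R L A]])

text \<open>Contracting \<open>L_sigma(R) = 0\<close> gives \<open>6 Ric^q(R) - 6 Ric(R) = 0\<close>.\<close>
lemma eigen_Ric_eq_RicQ:
  assumes R: "R \<in> curv_tensors" and L: "Lop I J K R = (\<lambda>x y z u. 6 * R x y z u)"
    and Ls: "Lsig I J K R = (\<lambda>x y z u. 0)"
  shows "Ric R = RicQ I J K R"
proof (intro ext)
  fix x y
  interpret curvature_tensor R by (rule curvature_tensor.intro[OF R])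
  have contract: "(\<Sum>e\<in>Basis. Lsig_term A R x e y e) = 6 * twisted_ric A R x (A y) - 2 * Ric R x y"
    if "A \<in> {I, J, K}" for A
    by (rule Lsig_term_contract[OF complex_structure_IJK[OF that] eigen_annihilated[OF R L that]])
  have "0 = (\<Sum>e\<in>Basis. Lsig I J K R x e y e)" using Ls by simp
  also have "\<dots> = (\<Sum>e\<in>Basis. Lsig_term I R x e y e) + (\<Sum>e\<in>Basis. Lsig_term J R x e y e)
      + (\<Sum>e\<in>Basis. Lsig_term K R x e y e)"
    by (simp add: Lsig_eq_Lsig_term sum.distrib)
  also have "\<dots> = 6 * RicQ I J K R x y - 6 * Ric R x y"
    by (simp add: contract RicQ_def sumA_def twisted_ric_def)
  finally show "Ric R x y = RicQ I J K R x y" by simp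
qed

text \<open>An invariant symmetric bilinear form is a multiple of \<open>g\<close> plus an element of
  \<open>Lambda^2_0 E\<close>: subtract its normalised trace.\<close>
lemma invariant_form_split:
  assumes bilin_c: "bilin c" and sym: "\<And>x y. c x y = c y x"
    and inv: "\<And>A x y. A \<in> {I, J, K} \<Longrightarrow> c (A x) (A y) = c x y"
  shows "\<exists>t. \<exists>b\<in>Lambda20 I J K. c = (\<lambda>x y. t * inner x y + b x y)"
proof -
  define t where "t = (\<Sum>e\<in>Basis. c e e) / real DIM('v)"
  define b where "b = (\<lambda>x y. c x y - t * inner x y)"
  have "b \<in> Lambda20 I J K"
    unfolding Lambda20_def mem_Collect_eq
  proof (intro conjI ballI allI)
    show "bilin b"
      using bilin_c unfolding b_def bilin_def
      by (auto intro!: linear_compose_sub const_times_linear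
          bounded_linear.linear[OF bounded_linear_inner_right]
          bounded_linear.linear[OF bounded_linear_inner_left])
    show "b x y = b y x" for x y by (simp add: b_def sym[of x y] inner_commute)
    show "(\<Sum>e\<in>Basis. b e e) = 0" by (simp add: b_def t_def sum_subtractf inner_Basis)
    show "b (A x) (A y) = b x y" if "A \<in> {I, J, K}" for A x y
      using inv[OF that] orthogonal[OF that] by (simp add: b_def)
  qed
  then show ?thesis by (intro exI[of _ t] bexI[of _ b]) (auto simp: b_def)
qed

lemma eigen_Ric_split:
  assumes R: "R \<in> curv_tensors" and L: "Lop I J K R = (\<lambda>x y z u. 6 * R x y z u)"
  shows "\<exists>t. \<exists>b\<in>Lambda20 I J K. Ric R = (\<lambda>x y. t * inner x y + b x y)"
proof -
  interpret curvature_tensor R by (rule curvature_tensor.intro[OF R])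
  show ?thesis
    by (rule invariant_form_split[OF bilin_Ric[OF multilin] Ric_sym eigen_Ric_invariant[OF R L]])
qed

end


theorem proposition4p2:
  fixes I J K :: "'v::euclidean_space \<Rightarrow> 'v" and n :: nat
  assumes "DIM('v) = 4 * n"
    and "quaternionic I J K"
  shows "(\<forall>b\<in>Lambda20 I J K.
            (let R = (\<lambda>x y z u. theta I J K b inner x y z u + 12 * psi b inner x y z u)
             in R \<in> curv_tensors
                \<and> Lop I J K R = (\<lambda>x y z u. 6 * R x y z u)
                \<and> Lsig I J K R = (\<lambda>x y z u. 0)
                \<and> Ric R = (\<lambda>x y. 48 * (real n + 1) * b x y)))
       \<and> (\<exists>c::real. c \<noteq> 0 \<and>
            (\<lambda>x y z u. theta I J K inner inner x y z u + 12 * psi inner inner x y z u)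
              = (\<lambda>x y z u. c * (pi2 I J K x y z u + 6 * pi1 x y z u)))
       \<and> Ric (\<lambda>x y z u. pi2 I J K x y z u + 6 * pi1 x y z u)
            = (\<lambda>x y. 12 * (2 * real n + 1) * inner x y)
       \<and> (\<forall>R\<in>curv_tensors.
            Lop I J K R = (\<lambda>x y z u. 6 * R x y z u) \<and> Lsig I J K R = (\<lambda>x y z u. 0) \<longrightarrow>
              Ric R = RicQ I J K R
              \<and> (\<forall>A\<in>{I, J, K}. actfull2 A (Ric R) = Ric R)
              \<and> (\<exists>t::real. \<exists>b\<in>Lambda20 I J K. Ric R = (\<lambda>x y. t * inner x y + b x y)))"
proof (intro conjI ballI impI)
  interpret quaternionic_structure I J K by (rule quaternionic_structure.intro[OF assms(2)])
  have dim: "real DIM('v) = 4 * real n" using assms(1) by simp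
  show "let R = (\<lambda>x y z u. theta I J K b inner x y z u + 12 * psi b inner x y z u)
        in R \<in> curv_tensors \<and> Lop I J K R = (\<lambda>x y z u. 6 * R x y z u)
           \<and> Lsig I J K R = (\<lambda>x y z u. 0) \<and> Ric R = (\<lambda>x y. 48 * (real n + 1) * b x y)"
    if b: "b \<in> Lambda20 I J K" for b
  proof -
    interpret quaternionic_form I J K b using b by unfold_locales (auto simp: Lambda20_def)
    have "(\<Sum>e\<in>Basis. b e e) = 0" using b by (simp add: Lambda20_def)
    from Rb_properties[OF this] show ?thesis
      unfolding Let_def Rb_def[symmetric] dim by (simp add: algebra_simps)
  qed
  show "\<exists>c::real. c \<noteq> 0 \<and> (\<lambda>x y z u. theta I J K inner inner x y z u + 12 * psi inner inner x y z u)
      = (\<lambda>x y z u. c * (pi2 I J K x y z u + 6 * pi1 x y z u))"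
    by (rule exI[of _ 4]) (simp add: theta_psi_inner)
  show "Ric (\<lambda>x y z u. pi2 I J K x y z u + 6 * pi1 x y z u) = (\<lambda>x y. 12 * (2 * real n + 1) * inner x y)"
    by (intro ext) (simp add: Ric_pi dim algebra_simps)
  fix R assume R: "R \<in> curv_tensors"
    and eigen: "Lop I J K R = (\<lambda>x y z u. 6 * R x y z u) \<and> Lsig I J K R = (\<lambda>x y z u. 0)"
  then have L: "Lop I J K R = (\<lambda>x y z u. 6 * R x y z u)" and Ls: "Lsig I J K R = (\<lambda>x y z u. 0)"
    by simp_all
  show "Ric R = RicQ I J K R" by (rule eigen_Ric_eq_RicQ[OF R L Ls])
  show "actfull2 A (Ric R) = Ric R" if "A \<in> {I, J, K}" for A
    using eigen_Ric_invariant[OF R L that] by (simp add: actfull2_def)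
  show "\<exists>t::real. \<exists>b\<in>Lambda20 I J K. Ric R = (\<lambda>x y. t * inner x y + b x y)"
    by (rule eigen_Ric_split[OF R L])
qed

end
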